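(* Let $f(w)=w^2$ on $\mathbb CP^1$, so $f^*\mathsf m$ has two antipodal conical points of angle $4\pi$ at $w=0$ and $w=\infty$, and let $(r,\varphi)$ be coordinates with $\varphi=2\arg w\in[0,4\pi)$ and $\cot(r/2)=|w|^2$, $r\in[0,\pi]$. For $\lambda=\nu(\nu+1)$ not in the spectrum, the function $$Y(\lambda)=\frac1w\Big(\frac{\cos(\nu r)}{\cos(\nu\pi)}+\frac{\sin(\nu r)}{\cos(\nu\pi)}|w|^2\Big)$$ lies in $L^2$, satisfies $(\Delta^*-\lambda)Y=0$, is bounded near $w=\infty$, and as $w\to0$ has the expansion $Y=w^{-1}+c(\lambda)+a(\lambda)\bar w+b(\lambda)w+O(|w|^{2-\epsilon})$ with $b(\lambda)\equiv0$, $c(\lambda)\equiv0$ and $a(\lambda)=(1+2\nu)\tan(\nu\pi)$.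
   Context: $\mathsf m=\frac{4|dz|^2}{(1+|z|^2)^2}$ on $\mathbb CP^1$; $\Delta^*$ is the positive Laplace–Beltrami operator of $f^*\mathsf m$, which in the coordinates $(r,\varphi)$ reads $\Delta^*=-\partial_r^2-\cot r\,\partial_r-(\sin r)^{-2}\partial_\varphi^2$. Here $w$ coincides with the distinguished parameter $x=\sqrt{z-0}$ at the critical point $w=0$. *)

theory Defs
  imports "HOL-Analysis.Analysis"
begin

definition rcoord :: "complex \<Rightarrow> real" where
  "rcoord w = (if w = 0 then pi else 2 * arctan (1 / (cmod w)^2))"

definition Yfun :: "complex \<Rightarrow> complex \<Rightarrow> complex" where
  "Yfun \<nu> w = (1 / w) * (cos (\<nu> * of_real (rcoord w)) / cos (\<nu> * of_real pi)
      + sin (\<nu> * of_real (rcoord w)) / cos (\<nu> * of_real pi) * of_real ((cmod w)^2))"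

definition w_of_polar :: "real \<Rightarrow> real \<Rightarrow> complex" where
  "w_of_polar r \<phi> = of_real (sqrt (cot (r / 2))) * cis (\<phi> / 2)"

definition Ypolar :: "complex \<Rightarrow> real \<Rightarrow> real \<Rightarrow> complex" where
  "Ypolar \<nu> r \<phi> = Yfun \<nu> (w_of_polar r \<phi>)"

text \<open>Area density of the pulled back metric f^* m, f(w) = w^2, w.r.t. Lebesgue measure in w:
  4 |f'(w)|^2 / (1 + |f(w)|^2)^2.\<close>
definition area_density :: "complex \<Rightarrow> real" where
  "area_density w = 4 * (cmod (2 * w))^2 / (1 + (cmod (w^2))^2)^2"

definition pd_r :: "(real \<Rightarrow> real \<Rightarrow> complex) \<Rightarrow> real \<Rightarrow> real \<Rightarrow> complex" where
  "pd_r F r \<phi> = vector_derivative (\<lambda>s. F s \<phi>) (at r)"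

definition pd_phi :: "(real \<Rightarrow> real \<Rightarrow> complex) \<Rightarrow> real \<Rightarrow> real \<Rightarrow> complex" where
  "pd_phi F r \<phi> = vector_derivative (\<lambda>t. F r t) (at \<phi>)"

definition polar_C2_at :: "(real \<Rightarrow> real \<Rightarrow> complex) \<Rightarrow> real \<Rightarrow> real \<Rightarrow> bool" where
  "polar_C2_at F r \<phi> \<longleftrightarrow>
     (\<forall>s\<in>{0<..<pi}. (\<lambda>s'. F s' \<phi>) differentiable (at s)) \<and> (\<lambda>s. pd_r F s \<phi>) differentiable (at r) \<and>
     (\<forall>t. (\<lambda>t'. F r t') differentiable (at t)) \<and> (\<lambda>t. pd_phi F r t) differentiable (at \<phi>)"

definition Lap_star :: "(real \<Rightarrow> real \<Rightarrow> complex) \<Rightarrow> real \<Rightarrow> real \<Rightarrow> complex" where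
  "Lap_star F r \<phi> = - pd_r (pd_r F) r \<phi> - of_real (cot r) * pd_r F r \<phi>
     - of_real (1 / (sin r)^2) * pd_phi (pd_phi F) r \<phi>"

end

theory Submission
  imports Defs "HOL-Probability.Sinc_Integral"
begin

text \<open>
  In the coordinates (r, \<phi>) one has 1/w = U(r) e^{-i\<phi>/2} with U(r) = sqrt(tan(r/2)), so Y separates
  as e^{-i\<phi>/2} g(r) / cos(\<nu>\<pi>) with g = cos(\<nu>r) U + sin(\<nu>r) / U. Because U' = h U with
  h = 1/(2 sin r), differentiating a U + b / U only shifts the coefficients by \<plusminus>h, and the
  identities 2h + cot r = U^{-2}, 2h - cot r = U^2 reduce the eigenvalue equation for g to the
  equations (cos \<nu>r)'' = -\<nu>^2 cos \<nu>r and (sin \<nu>r)'' = -\<nu>^2 sin \<nu>r.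

  Since r |w|^2 \<le> 2, the product |Y| |w| is bounded; this gives boundedness near \<infinity> and, against the
  area density 16 |w|^2 / (1 + |w|^4)^2, square integrability. Near w = 0 we have
  r = \<pi> - 2 arctan |w|^2, and expanding cos and sin of \<nu>r around \<nu>\<pi> gives
  Y = 1/w + (1 + 2\<nu>) tan(\<nu>\<pi>) conj w + O(|w|^3).
\<close>

definition sqrt_tan_half :: "real \<Rightarrow> real" where
  "sqrt_tan_half s = sqrt (tan (s / 2))"

definition half_csc :: "real \<Rightarrow> real" where
  "half_csc s = 1 / (2 * sin s)"

lemma sqrt_tan_half_pos: "s \<in> {0<..<pi} \<Longrightarrow> 0 < sqrt_tan_half s"
  unfolding sqrt_tan_half_def by (auto intro!: tan_gt_zero)

lemma sqrt_tan_half_square: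
  assumes "s \<in> {0<..<pi}"
  shows "sqrt_tan_half s ^ 2 = sin (s / 2) / cos (s / 2)"
proof -
  have "0 < tan (s / 2)" using assms by (auto intro!: tan_gt_zero)
  then show ?thesis unfolding sqrt_tan_half_def by (simp add: tan_def)
qed

lemma
  assumes "s \<in> {0<..<pi}"
  shows half_csc_plus_cot: "2 * half_csc s + cot s = 1 / sqrt_tan_half s ^ 2"
    and half_csc_minus_cot: "2 * half_csc s - cot s = sqrt_tan_half s ^ 2"
proof -
  have c: "cos (s/2) > 0" and sn: "sin (s/2) > 0"
    using assms by (auto intro!: cos_gt_zero_pi sin_gt_zero)
  have sr: "sin s = 2 * sin (s/2) * cos (s/2)"
    using sin_double[of "s/2"] by simp
  have cos_cos: "cos s = 2 * cos (s/2)^2 - 1" and cos_sin: "cos s = 1 - 2 * sin (s/2)^2"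
    using cos_double_cos[of "s/2"] cos_double_sin[of "s/2"] by simp_all
  show "2 * half_csc s + cot s = 1 / sqrt_tan_half s ^ 2"
    using c sn unfolding half_csc_def cot_def sqrt_tan_half_square[OF assms] sr cos_cos
    by (simp add: field_simps power2_eq_square)
  show "2 * half_csc s - cot s = sqrt_tan_half s ^ 2"
    using c sn unfolding half_csc_def cot_def sqrt_tan_half_square[OF assms] sr cos_sin
    by (simp add: field_simps power2_eq_square)
qed

lemma sqrt_tan_half_deriv:
  assumes "s \<in> {0<..<pi}"
  shows "(sqrt_tan_half has_real_derivative half_csc s * sqrt_tan_half s) (at s)"
proof -
  define u where "u = sqrt_tan_half s"
  have c: "cos (s/2) > 0" and t: "tan (s/2) > 0"
    using assms by (auto intro!: cos_gt_zero_pi tan_gt_zero)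
  have u: "0 < u" using sqrt_tan_half_pos[OF assms] unfolding u_def .
  have "(sqrt_tan_half has_real_derivative inverse u / 2 * (inverse (cos (s/2) ^ 2) * (1/2))) (at s)"
    unfolding sqrt_tan_half_def[abs_def] u_def
    using c t by (auto intro!: derivative_eq_intros DERIV_tan[THEN DERIV_chain2])
  also have "inverse u / 2 * (inverse (cos (s/2) ^ 2) * (1/2)) = u / (4 * (u^2 * cos (s/2) ^ 2))"
    using u by (simp add: field_simps power2_eq_square)
  also have "u^2 * cos (s/2) ^ 2 = sin (s/2) * cos (s/2)"
    using sqrt_tan_half_square[OF assms] c unfolding u_def[symmetric] by (simp add: field_simps power2_eq_square)
  also have "u / (4 * (sin (s/2) * cos (s/2))) = half_csc s * u"
    unfolding half_csc_def using sin_double[of "s/2"] by simp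
  finally show ?thesis unfolding u_def .
qed

lemma half_csc_deriv:
  assumes "sin s \<noteq> 0"
  shows "(half_csc has_real_derivative - cot s * half_csc s) (at s)"
  unfolding half_csc_def[abs_def] cot_def using assms
  by (auto intro!: derivative_eq_intros simp: field_simps power2_eq_square)

lemma has_vector_derivative_cos_scaled:
  fixes \<nu> :: complex
  shows "((\<lambda>s. cos (\<nu> * of_real s)) has_vector_derivative - \<nu> * sin (\<nu> * of_real s)) (at s)"
proof -
  have "((\<lambda>z. cos (\<nu> * z)) has_field_derivative - \<nu> * sin (\<nu> * of_real s)) (at (of_real s))"
    by (auto intro!: derivative_eq_intros)
  from has_vector_derivative_real_field[OF this] show ?thesis by simp
qed

lemma has_vector_derivative_sin_scaled:
  fixes \<nu> :: complex
  shows "((\<lambda>s. sin (\<nu> * of_real s)) has_vector_derivative \<nu> * cos (\<nu> * of_real s)) (at s)"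
proof -
  have "((\<lambda>z. sin (\<nu> * z)) has_field_derivative \<nu> * cos (\<nu> * of_real s)) (at (of_real s))"
    by (auto intro!: derivative_eq_intros)
  from has_vector_derivative_real_field[OF this] show ?thesis by simp
qed

lemma has_vector_derivative_sqrt_tan_half_combination:
  fixes a b :: "real \<Rightarrow> complex"
  assumes s: "s \<in> {0<..<pi}"
    and a: "(a has_vector_derivative a') (at s)" and b: "(b has_vector_derivative b') (at s)"
  shows "((\<lambda>s. a s * of_real (sqrt_tan_half s) + b s / of_real (sqrt_tan_half s)) has_vector_derivative
      (a' + of_real (half_csc s) * a s) * of_real (sqrt_tan_half s)
      + (b' - of_real (half_csc s) * b s) / of_real (sqrt_tan_half s)) (at s)"
proof -
  have u: "sqrt_tan_half s > 0" using sqrt_tan_half_pos[OF s] .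
  have du: "((\<lambda>s. of_real (sqrt_tan_half s)) has_vector_derivative
      of_real (half_csc s * sqrt_tan_half s)) (at s)"
    by (rule has_vector_derivative_of_real[OF sqrt_tan_half_deriv[OF s]])
  have "((\<lambda>s. 1 / sqrt_tan_half s) has_real_derivative - half_csc s / sqrt_tan_half s) (at s)"
    using u by (auto intro!: derivative_eq_intros sqrt_tan_half_deriv[OF s] simp: field_simps power2_eq_square)
  then have dinv: "((\<lambda>s. of_real (1 / sqrt_tan_half s)) has_vector_derivative
      of_real (- half_csc s / sqrt_tan_half s)) (at s)"
    by (rule has_vector_derivative_of_real)
  have "((\<lambda>s. a s * of_real (sqrt_tan_half s) + b s * of_real (1 / sqrt_tan_half s)) has_vector_derivative
      (a s * of_real (half_csc s * sqrt_tan_half s) + a' * of_real (sqrt_tan_half s))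
      + (b s * of_real (- half_csc s / sqrt_tan_half s) + b' * of_real (1 / sqrt_tan_half s))) (at s)"
    by (intro has_vector_derivative_add has_vector_derivative_mult a b du dinv)
  then show ?thesis using u by (simp add: field_simps)
qed

definition Yradial :: "complex \<Rightarrow> real \<Rightarrow> complex" where
  "Yradial \<nu> s = cos (\<nu> * of_real s) * of_real (sqrt_tan_half s)
     + sin (\<nu> * of_real s) / of_real (sqrt_tan_half s)"

definition Yradial' :: "complex \<Rightarrow> real \<Rightarrow> complex" where
  "Yradial' \<nu> s =
     (of_real (half_csc s) * cos (\<nu> * of_real s) - \<nu> * sin (\<nu> * of_real s)) * of_real (sqrt_tan_half s)
     + (\<nu> * cos (\<nu> * of_real s) - of_real (half_csc s) * sin (\<nu> * of_real s)) / of_real (sqrt_tan_half s)"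

definition Yradial'' :: "complex \<Rightarrow> real \<Rightarrow> complex" where
  "Yradial'' \<nu> s =
     ((of_real (half_csc s ^ 2 - cot s * half_csc s) - \<nu>\<^sup>2) * cos (\<nu> * of_real s)
       - 2 * \<nu> * of_real (half_csc s) * sin (\<nu> * of_real s)) * of_real (sqrt_tan_half s)
     + ((of_real (half_csc s ^ 2 + cot s * half_csc s) - \<nu>\<^sup>2) * sin (\<nu> * of_real s)
       - 2 * \<nu> * of_real (half_csc s) * cos (\<nu> * of_real s)) / of_real (sqrt_tan_half s)"

lemma has_vector_derivative_Yradial:
  "s \<in> {0<..<pi} \<Longrightarrow> (Yradial \<nu> has_vector_derivative Yradial' \<nu> s) (at s)"
  unfolding Yradial_def[abs_def] Yradial'_def
  by (rule has_vector_derivative_sqrt_tan_half_combination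
      [OF _ has_vector_derivative_cos_scaled has_vector_derivative_sin_scaled, THEN has_vector_derivative_eq_rhs])
     (simp_all add: algebra_simps)

lemma has_vector_derivative_Yradial':
  assumes s: "s \<in> {0<..<pi}"
  shows "(Yradial' \<nu> has_vector_derivative Yradial'' \<nu> s) (at s)"
proof -
  have "sin s \<noteq> 0" using s by (auto dest: sin_gt_zero)
  then have dh: "((\<lambda>s. of_real (half_csc s)) has_vector_derivative of_real (- cot s * half_csc s)) (at s)"
    by (intro has_vector_derivative_of_real half_csc_deriv)
  have da: "((\<lambda>s. of_real (half_csc s) * cos (\<nu> * of_real s) - \<nu> * sin (\<nu> * of_real s))
      has_vector_derivative of_real (half_csc s) * (- \<nu> * sin (\<nu> * of_real s))
        + of_real (- cot s * half_csc s) * cos (\<nu> * of_real s) - \<nu> * (\<nu> * cos (\<nu> * of_real s))) (at s)"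
    by (intro has_vector_derivative_diff has_vector_derivative_mult has_vector_derivative_mult_right dh
        has_vector_derivative_cos_scaled has_vector_derivative_sin_scaled)
  have db: "((\<lambda>s. \<nu> * cos (\<nu> * of_real s) - of_real (half_csc s) * sin (\<nu> * of_real s))
      has_vector_derivative \<nu> * (- \<nu> * sin (\<nu> * of_real s))
        - (of_real (half_csc s) * (\<nu> * cos (\<nu> * of_real s)) + of_real (- cot s * half_csc s) * sin (\<nu> * of_real s))) (at s)"
    by (intro has_vector_derivative_diff has_vector_derivative_mult has_vector_derivative_mult_right dh
        has_vector_derivative_cos_scaled has_vector_derivative_sin_scaled)
  show ?thesis
    unfolding Yradial'_def[abs_def] Yradial''_def
    by (rule has_vector_derivative_sqrt_tan_half_combination[OF s da db, THEN has_vector_derivative_eq_rhs])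
       (simp add: algebra_simps power2_eq_square)
qed

lemma Yradial_ode:
  assumes s: "s \<in> {0<..<pi}"
  shows "Yradial'' \<nu> s + of_real (cot s) * Yradial' \<nu> s - of_real (half_csc s ^ 2) * Yradial \<nu> s
    = - \<nu> * (\<nu> + 1) * Yradial \<nu> s"
proof -
  define u h k A B where "u = complex_of_real (sqrt_tan_half s)" and "h = complex_of_real (half_csc s)"
    and "k = complex_of_real (cot s)" and "A = cos (\<nu> * of_real s)" and "B = sin (\<nu> * of_real s)"
  have u: "u \<noteq> 0" using sqrt_tan_half_pos[OF s] unfolding u_def by simp
  have plus: "2 * h + k = 1 / u^2" and minus: "2 * h - k = u^2"
    unfolding u_def h_def k_def
    using arg_cong[OF half_csc_plus_cot[OF s], of complex_of_real]
          arg_cong[OF half_csc_minus_cot[OF s], of complex_of_real] by simp_all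
  have "Yradial'' \<nu> s + k * Yradial' \<nu> s - h^2 * Yradial \<nu> s
      = - \<nu>\<^sup>2 * Yradial \<nu> s - \<nu> * ((2 * h + k) * B * u + (2 * h - k) * A / u)"
    unfolding Yradial_def Yradial'_def Yradial''_def of_real_add of_real_diff of_real_mult of_real_power
      u_def[symmetric] h_def[symmetric] k_def[symmetric]
      A_def[symmetric] B_def[symmetric]
    using u by (simp add: field_simps power2_eq_square)
  also have "(2 * h + k) * B * u + (2 * h - k) * A / u = Yradial \<nu> s"
    unfolding plus minus Yradial_def u_def[symmetric] A_def[symmetric] B_def[symmetric]
    using u by (simp add: field_simps power2_eq_square)
  finally show ?thesis unfolding h_def k_def by (simp add: algebra_simps power2_eq_square)
qed

lemma Ypolar_eq_phase_Yradial:
  assumes s: "s \<in> {0<..<pi}"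
  shows "Ypolar \<nu> s \<phi> = exp (\<phi> *\<^sub>R (- \<i> / 2)) * Yradial \<nu> s / cos (\<nu> * of_real pi)"
proof -
  define u where "u = sqrt_tan_half s"
  define w where "w = w_of_polar s \<phi>"
  have u: "u > 0" using sqrt_tan_half_pos[OF s] unfolding u_def .
  have t: "tan (s/2) > 0" using s by (auto intro!: tan_gt_zero)
  have "sqrt (cot (s/2)) = 1 / u"
    using t unfolding u_def sqrt_tan_half_def by (simp add: cot_def tan_def real_sqrt_divide)
  then have w: "w = of_real (1 / u) * cis (\<phi> / 2)"
    unfolding w_def w_of_polar_def by simp
  have w0: "w \<noteq> 0" and norm_w: "cmod w = 1 / u"
    using u unfolding w by (simp_all add: norm_divide)
  have "u^2 = tan (s/2)" using t unfolding u_def sqrt_tan_half_def by simp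
  then have "rcoord w = 2 * arctan (tan (s / 2))"
    unfolding rcoord_def norm_w using w0 u by (simp add: power_divide)
  then have rcoord_w: "rcoord w = s" using s by (simp add: arctan_tan)
  have inverse_w: "1 / w = of_real u * exp (\<phi> *\<^sub>R (- \<i> / 2))"
    unfolding w using u
    by (simp add: cis_conv_exp scaleR_conv_of_real field_simps exp_minus flip: exp_add)
  show ?thesis
    unfolding Ypolar_def w_def[symmetric] Yfun_def rcoord_w inverse_w norm_w Yradial_def u_def[symmetric]
    using u by (cases "cos (\<nu> * of_real pi) = 0") (simp_all add: field_simps power2_eq_square)
qed

lemma has_vector_derivative_Ypolar_phi:
  assumes s: "s \<in> {0<..<pi}"
  shows "((\<lambda>t. Ypolar \<nu> s t) has_vector_derivative - (\<i> / 2) * Ypolar \<nu> s \<phi>) (at \<phi>)"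
proof -
  have "((\<lambda>t. exp (t *\<^sub>R (- \<i> / 2)) * (Yradial \<nu> s / cos (\<nu> * of_real pi))) has_vector_derivative
      (- \<i> / 2) * exp (\<phi> *\<^sub>R (- \<i> / 2)) * (Yradial \<nu> s / cos (\<nu> * of_real pi))) (at \<phi>)"
    by (intro has_vector_derivative_mult_left exp_scaleR_has_vector_derivative_left)
  then show ?thesis
    unfolding Ypolar_eq_phase_Yradial[OF s] by (simp add: mult.assoc)
qed

lemma pd_phi_Ypolar:
  "s \<in> {0<..<pi} \<Longrightarrow> pd_phi (Ypolar \<nu>) s \<phi> = - (\<i> / 2) * Ypolar \<nu> s \<phi>"
  unfolding pd_phi_def by (rule vector_derivative_at[OF has_vector_derivative_Ypolar_phi])

lemma has_vector_derivative_Ypolar_r: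
  assumes s: "s \<in> {0<..<pi}"
  shows "((\<lambda>s. Ypolar \<nu> s \<phi>) has_vector_derivative
      exp (\<phi> *\<^sub>R (- \<i> / 2)) * Yradial' \<nu> s / cos (\<nu> * of_real pi)) (at s)"
proof (rule has_vector_derivative_transform_within_open[OF _ open_greaterThanLessThan s])
  show "((\<lambda>s. exp (\<phi> *\<^sub>R (- \<i> / 2)) * Yradial \<nu> s / cos (\<nu> * of_real pi)) has_vector_derivative
      exp (\<phi> *\<^sub>R (- \<i> / 2)) * Yradial' \<nu> s / cos (\<nu> * of_real pi)) (at s)"
    by (intro has_vector_derivative_divide has_vector_derivative_mult_right has_vector_derivative_Yradial s)
qed (simp add: Ypolar_eq_phase_Yradial)

lemma pd_r_Ypolar:
  "s \<in> {0<..<pi} \<Longrightarrow> pd_r (Ypolar \<nu>) s \<phi> = exp (\<phi> *\<^sub>R (- \<i> / 2)) * Yradial' \<nu> s / cos (\<nu> * of_real pi)"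
  unfolding pd_r_def by (rule vector_derivative_at[OF has_vector_derivative_Ypolar_r])

lemma has_vector_derivative_pd_r_Ypolar:
  assumes r: "r \<in> {0<..<pi}"
  shows "((\<lambda>s. pd_r (Ypolar \<nu>) s \<phi>) has_vector_derivative
      exp (\<phi> *\<^sub>R (- \<i> / 2)) * Yradial'' \<nu> r / cos (\<nu> * of_real pi)) (at r)"
proof (rule has_vector_derivative_transform_within_open[OF _ open_greaterThanLessThan r])
  show "((\<lambda>s. exp (\<phi> *\<^sub>R (- \<i> / 2)) * Yradial' \<nu> s / cos (\<nu> * of_real pi)) has_vector_derivative
      exp (\<phi> *\<^sub>R (- \<i> / 2)) * Yradial'' \<nu> r / cos (\<nu> * of_real pi)) (at r)"
    by (intro has_vector_derivative_divide has_vector_derivative_mult_right has_vector_derivative_Yradial' r)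
qed (simp add: pd_r_Ypolar)

lemma Ypolar_eigenfunction:
  assumes r: "r \<in> {0<..<pi}"
  shows "polar_C2_at (Ypolar \<nu>) r \<phi>"
    and "Lap_star (Ypolar \<nu>) r \<phi> = \<nu> * (\<nu> + 1) * Ypolar \<nu> r \<phi>"
proof -
  have "(\<lambda>t. pd_phi (Ypolar \<nu>) r t) = (\<lambda>t. - (\<i> / 2) * Ypolar \<nu> r t)"
    using pd_phi_Ypolar[OF r] by auto
  then have dphi2: "((\<lambda>t. pd_phi (Ypolar \<nu>) r t) has_vector_derivative
      - (\<i> / 2) * (- (\<i> / 2) * Ypolar \<nu> r \<phi>)) (at \<phi>)"
    by (simp only:) (intro has_vector_derivative_mult_right has_vector_derivative_Ypolar_phi r)
  show "polar_C2_at (Ypolar \<nu>) r \<phi>"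
    unfolding polar_C2_at_def
    using has_vector_derivative_Ypolar_r has_vector_derivative_pd_r_Ypolar[OF r]
      has_vector_derivative_Ypolar_phi[OF r] dphi2
    by (blast intro: differentiableI_vector)
  have pd_phi2: "pd_phi (pd_phi (Ypolar \<nu>)) r \<phi> = - (1 / 4) * Ypolar \<nu> r \<phi>"
    unfolding pd_phi_def[of "pd_phi (Ypolar \<nu>)"] vector_derivative_at[OF dphi2] by simp
  have pd_r2: "pd_r (pd_r (Ypolar \<nu>)) r \<phi>
      = exp (\<phi> *\<^sub>R (- \<i> / 2)) * Yradial'' \<nu> r / cos (\<nu> * of_real pi)"
    unfolding pd_r_def[of "pd_r (Ypolar \<nu>)"] by (rule vector_derivative_at[OF has_vector_derivative_pd_r_Ypolar[OF r]])
  have csc: "1 / (sin r)\<^sup>2 / 4 = (half_csc r)\<^sup>2"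
    unfolding half_csc_def by (simp add: power_divide)
  have "Lap_star (Ypolar \<nu>) r \<phi> = - exp (\<phi> *\<^sub>R (- \<i> / 2)) / cos (\<nu> * of_real pi)
      * (Yradial'' \<nu> r + of_real (cot r) * Yradial' \<nu> r - of_real ((half_csc r)\<^sup>2) * Yradial \<nu> r)"
    unfolding Lap_star_def pd_r2 pd_r_Ypolar[OF r] pd_phi2 Ypolar_eq_phase_Yradial[OF r] csc[symmetric]
    by (cases "cos (\<nu> * of_real pi) = 0") (simp_all add: field_simps)
  also have "\<dots> = \<nu> * (\<nu> + 1) * Ypolar \<nu> r \<phi>"
    unfolding Yradial_ode[OF r] Ypolar_eq_phase_Yradial[OF r]
    by (cases "cos (\<nu> * of_real pi) = 0") (simp_all add: field_simps)
  finally show "Lap_star (Ypolar \<nu>) r \<phi> = \<nu> * (\<nu> + 1) * Ypolar \<nu> r \<phi>" .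
qed

lemma
  fixes z :: complex
  shows norm_cos_minus_one_le: "norm (cos z - 1) \<le> exp (norm z) * norm z ^ 2"
    and norm_sin_minus_self_le: "norm (sin z - z) \<le> exp (norm z) * norm z ^ 3 / 2"
    and norm_sin_le_exp_mult: "norm (sin z) \<le> exp (norm z) * norm z"
proof -
  have exp_Im: "exp \<bar>Im z\<bar> \<le> exp (norm z)" using abs_Im_le_cmod[of z] by simp
  have "norm (cos z - 1) \<le> exp \<bar>Im z\<bar> * norm z ^ 2"
    using Taylor_cos[of z 1] by (simp add: cos_coeff_def power2_eq_square)
  also have "\<dots> \<le> exp (norm z) * norm z ^ 2" using exp_Im by (intro mult_right_mono) auto
  finally show "norm (cos z - 1) \<le> exp (norm z) * norm z ^ 2" .
  have "norm (sin z - z) \<le> exp \<bar>Im z\<bar> * norm z ^ 3 / 2"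
    using Taylor_sin[of z 2] by (simp add: sin_coeff_def numeral_2_eq_2 eval_nat_numeral)
  also have "\<dots> \<le> exp (norm z) * norm z ^ 3 / 2" using exp_Im by (intro divide_right_mono mult_right_mono) auto
  finally show "norm (sin z - z) \<le> exp (norm z) * norm z ^ 3 / 2" .
  have "norm (sin z) \<le> exp \<bar>Im z\<bar> * norm z"
    using Taylor_sin[of z 0] by (simp add: sin_coeff_def)
  also have "\<dots> \<le> exp (norm z) * norm z" using exp_Im by (intro mult_right_mono) auto
  finally show "norm (sin z) \<le> exp (norm z) * norm z" .
qed

lemma rcoord_bounds: "0 \<le> rcoord w" "rcoord w \<le> pi"
  unfolding rcoord_def using arctan_ubound[of "1 / (cmod w)^2"] by auto

lemma rcoord_mult_norm_square_le: "rcoord w * (cmod w)\<^sup>2 \<le> 2"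
proof (cases "w = 0")
  case False
  then have "arctan (1 / (cmod w)\<^sup>2) * (cmod w)\<^sup>2 \<le> 1 / (cmod w)\<^sup>2 * (cmod w)\<^sup>2"
    by (intro mult_right_mono arctan_le_self) auto
  with False show ?thesis unfolding rcoord_def by simp
qed simp

text \<open>No hypotheses are needed: for w = 0 or cos(\<nu>\<pi>) = 0 the left side is 0, as x / 0 = 0.\<close>

lemma norm_Yfun_mult_norm_le:
  "cmod (Yfun \<nu> w) * cmod w \<le> exp (cmod \<nu> * pi) * (1 + 2 * cmod \<nu>) / cmod (cos (\<nu> * of_real pi))"
proof (cases "w = 0")
  case False
  define r where "r = rcoord w"
  have r: "0 \<le> r" "r \<le> pi" unfolding r_def by (rule rcoord_bounds)+
  have norm_\<nu>r: "cmod (\<nu> * of_real r) \<le> cmod \<nu> * pi"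
    unfolding norm_mult using r by (intro mult_left_mono) auto
  have cos_le: "cmod (cos (\<nu> * of_real r)) \<le> exp (cmod \<nu> * pi)"
    using norm_cos_le[of "\<nu> * of_real r"] norm_\<nu>r by (meson exp_le_cancel_iff order_trans)
  have "cmod (sin (\<nu> * of_real r)) \<le> exp (cmod (\<nu> * of_real r)) * cmod (\<nu> * of_real r)"
    by (rule norm_sin_le_exp_mult)
  also have "\<dots> \<le> exp (cmod \<nu> * pi) * (cmod \<nu> * r)"
    using norm_\<nu>r r by (intro mult_mono) (auto simp: norm_mult)
  finally have "cmod (sin (\<nu> * of_real r)) * (cmod w)\<^sup>2 \<le> exp (cmod \<nu> * pi) * (cmod \<nu> * r) * (cmod w)\<^sup>2"
    by (rule mult_right_mono) simp
  also have "\<dots> = exp (cmod \<nu> * pi) * cmod \<nu> * (r * (cmod w)\<^sup>2)" by simp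
  also have "\<dots> \<le> exp (cmod \<nu> * pi) * cmod \<nu> * 2"
    unfolding r_def by (intro mult_left_mono rcoord_mult_norm_square_le) auto
  finally have sin_le: "cmod (sin (\<nu> * of_real r)) * (cmod w)\<^sup>2 \<le> exp (cmod \<nu> * pi) * (2 * cmod \<nu>)"
    by simp
  have "Yfun \<nu> w = (cos (\<nu> * of_real r) + sin (\<nu> * of_real r) * of_real ((cmod w)\<^sup>2))
      / (w * cos (\<nu> * of_real pi))"
    unfolding Yfun_def r_def[symmetric] by (simp add: add_divide_distrib mult.commute)
  then have "cmod (Yfun \<nu> w) * cmod w
      = cmod (cos (\<nu> * of_real r) + sin (\<nu> * of_real r) * of_real ((cmod w)\<^sup>2)) / cmod (cos (\<nu> * of_real pi))"
    using False by (simp add: norm_mult norm_divide)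
  also have "\<dots> \<le> (cmod (cos (\<nu> * of_real r)) + cmod (sin (\<nu> * of_real r)) * (cmod w)\<^sup>2)
      / cmod (cos (\<nu> * of_real pi))"
    by (intro divide_right_mono order_trans[OF norm_triangle_ineq]) (auto simp: norm_mult norm_power)
  also have "\<dots> \<le> exp (cmod \<nu> * pi) * (1 + 2 * cmod \<nu>) / cmod (cos (\<nu> * of_real pi))"
    using cos_le sin_le by (intro divide_right_mono) (auto simp: algebra_simps)
  finally show ?thesis .
qed simp

lemma integrable_inverse_1_plus_square_Re_Im:
  "integrable lborel (\<lambda>w::complex. inverse (1 + (Re w)\<^sup>2) * inverse (1 + (Im w)\<^sup>2))"
proof (rule integrableI_bounded)
  define f where "f = (\<lambda>x::real. ennreal (inverse (1 + x\<^sup>2)))"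
  have f_finite: "(\<integral>\<^sup>+x. f x \<partial>lborel) < \<infinity>"
    using integrableD(2)[OF integrable_inverse_1_plus_square[unfolded set_integrable_def]]
    unfolding f_def by (simp add: abs_of_pos add_pos_nonneg top.not_eq_extremum)
  have "ennreal (norm (inverse (1 + (Re w)\<^sup>2) * inverse (1 + (Im w)\<^sup>2))) = (\<Prod>b\<in>Basis. f (w \<bullet> b))" for w
    unfolding f_def by (simp add: Basis_complex_def inner_complex_def abs_mult ennreal_mult' add_pos_nonneg)
  then have "(\<integral>\<^sup>+w. ennreal (norm (inverse (1 + (Re w)\<^sup>2) * inverse (1 + (Im w)\<^sup>2))) \<partial>lborel)
      = (\<integral>\<^sup>+w. (\<Prod>b\<in>(Basis::complex set). f (w \<bullet> b)) \<partial>lborel)"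
    by simp
  also have "\<dots> = (\<Prod>b\<in>(Basis::complex set). (\<integral>\<^sup>+x. f x \<partial>lborel))"
    by (rule nn_integral_lborel_prod) (auto simp: f_def)
  also have "\<dots> = (\<integral>\<^sup>+x. f x \<partial>lborel) * (\<integral>\<^sup>+x. f x \<partial>lborel)"
    by (simp add: Basis_complex_def)
  also have "\<dots> < \<infinity>" using f_finite by (simp add: ennreal_mult_less_top)
  finally show "(\<integral>\<^sup>+w. ennreal (norm (inverse (1 + (Re w)\<^sup>2) * inverse (1 + (Im w)\<^sup>2))) \<partial>lborel) < \<infinity>" .
qed measurable

lemma area_density_le:
  "area_density w \<le> 32 * (cmod w)\<^sup>2 * (inverse (1 + (Re w)\<^sup>2) * inverse (1 + (Im w)\<^sup>2))"
proof -
  define x y \<rho> where "x = (Re w)\<^sup>2" and "y = (Im w)\<^sup>2" and "\<rho> = (cmod w)\<^sup>2"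
  have xy: "0 \<le> x" "0 \<le> y" "\<rho> = x + y" unfolding x_def y_def \<rho>_def by (simp_all add: cmod_power2)
  have "0 \<le> (\<rho> - 1)\<^sup>2" by simp
  then have "\<rho> \<le> 1 + \<rho>\<^sup>2" using xy by (simp add: power2_eq_square algebra_simps)
  moreover have "(1 + x) * (1 + y) \<le> 1 + \<rho> + \<rho>\<^sup>2"
    using xy by (simp add: power2_eq_square algebra_simps)
  moreover have "1 + \<rho>\<^sup>2 \<le> (1 + \<rho>\<^sup>2)\<^sup>2"
    using self_le_power[of "1 + \<rho>\<^sup>2" 2] by simp
  ultimately have le: "(1 + x) * (1 + y) \<le> 2 * (1 + \<rho>\<^sup>2)\<^sup>2" by linarith
  then have "32 / (2 * (1 + \<rho>\<^sup>2)\<^sup>2) \<le> 32 / ((1 + x) * (1 + y))"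
  proof (rule divide_left_mono)
    have "0 < (1 + x) * (1 + y)" using xy by (simp add: add_pos_nonneg)
    moreover have "0 < 2 * (1 + \<rho>\<^sup>2)\<^sup>2"
      using add_pos_nonneg[OF zero_less_one zero_le_power2[of \<rho>]] by simp
    ultimately show "0 < 2 * (1 + \<rho>\<^sup>2)\<^sup>2 * ((1 + x) * (1 + y))" by (rule mult_pos_pos[rotated])
  qed (simp_all add: le)
  then have "\<rho> * (16 / (1 + \<rho>\<^sup>2)\<^sup>2) \<le> \<rho> * (32 / ((1 + x) * (1 + y)))"
    unfolding \<rho>_def by (intro mult_left_mono) auto
  moreover have "area_density w = \<rho> * (16 / (1 + \<rho>\<^sup>2)\<^sup>2)"
    unfolding area_density_def \<rho>_def by (simp add: norm_mult norm_power power_mult_distrib)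
  ultimately show ?thesis unfolding x_def y_def \<rho>_def by (simp add: field_simps)
qed

lemma integrable_Yfun_square:
  "integrable lborel (\<lambda>w. (cmod (Yfun \<nu> w))\<^sup>2 * area_density w)"
proof (rule Bochner_Integration.integrable_bound)
  define C where "C = exp (cmod \<nu> * pi) * (1 + 2 * cmod \<nu>) / cmod (cos (\<nu> * of_real pi))"
  define h where "h = (\<lambda>w::complex. inverse (1 + (Re w)\<^sup>2) * inverse (1 + (Im w)\<^sup>2))"
  show "integrable lborel (\<lambda>w. 32 * C\<^sup>2 * h w)"
    unfolding h_def using integrable_inverse_1_plus_square_Re_Im by simp
  show "(\<lambda>w. (cmod (Yfun \<nu> w))\<^sup>2 * area_density w) \<in> borel_measurable lborel"
    unfolding Yfun_def[abs_def] rcoord_def[abs_def] area_density_def by measurable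
  show "AE w in lborel. norm ((cmod (Yfun \<nu> w))\<^sup>2 * area_density w) \<le> norm (32 * C\<^sup>2 * h w)"
  proof (rule AE_I2)
    fix w
    have h: "0 \<le> h w" unfolding h_def by simp
    have "(cmod (Yfun \<nu> w))\<^sup>2 * area_density w \<le> (cmod (Yfun \<nu> w))\<^sup>2 * (32 * (cmod w)\<^sup>2 * h w)"
      unfolding h_def by (intro mult_left_mono area_density_le) simp
    also have "\<dots> = 32 * (cmod (Yfun \<nu> w) * cmod w)\<^sup>2 * h w" by (simp add: power_mult_distrib)
    also have "\<dots> \<le> 32 * C\<^sup>2 * h w"
      unfolding C_def using h by (intro mult_right_mono mult_left_mono power_mono norm_Yfun_mult_norm_le) auto
    finally show "norm ((cmod (Yfun \<nu> w))\<^sup>2 * area_density w) \<le> norm (32 * C\<^sup>2 * h w)"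
      using h by (simp add: area_density_def)
  qed
qed

lemma arctan_ge_cubic:
  assumes "0 \<le> x"
  shows "x - x ^ 3 / 3 \<le> arctan x"
proof -
  have "(\<lambda>t. arctan t - t + t ^ 3 / 3) 0 \<le> (\<lambda>t. arctan t - t + t ^ 3 / 3) x"
  proof (rule DERIV_nonneg_imp_nondecreasing[OF assms])
    fix t :: real
    have pos: "0 < 1 + t\<^sup>2"
      using add_pos_nonneg[OF zero_less_one zero_le_power2[of t]] .
    then have "1 / (1 + t\<^sup>2) - 1 + t\<^sup>2 = t ^ 4 / (1 + t\<^sup>2)"
      by (simp add: field_simps power2_eq_square power4_eq_xxxx)
    then have "0 \<le> 1 / (1 + t\<^sup>2) - 1 + t\<^sup>2"
      using pos by simp
    moreover have "DERIV (\<lambda>t. arctan t - t + t ^ 3 / 3) t :> 1 / (1 + t\<^sup>2) - 1 + t\<^sup>2"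
      by (auto intro!: derivative_eq_intros simp: field_simps)
    ultimately show "\<exists>y. DERIV (\<lambda>t. arctan t - t + t ^ 3 / 3) t :> y \<and> 0 \<le> y" by blast
  qed
  then show ?thesis by simp
qed

lemma rcoord_eq_pi_minus_arctan:
  assumes "w \<noteq> 0"
  shows "rcoord w = pi - 2 * arctan ((cmod w)\<^sup>2)"
  using assms arctan_inverse[of "(cmod w)\<^sup>2"] unfolding rcoord_def by (simp add: inverse_eq_divide)

lemma Yfun_minus_leading_terms:
  fixes \<nu> w :: complex
  assumes w: "w \<noteq> 0" and cos_nonzero: "cos (\<nu> * of_real pi) \<noteq> 0"
  defines "\<rho> \<equiv> (cmod w)\<^sup>2"
  defines "z \<equiv> \<nu> * of_real (2 * arctan \<rho>)"
  defines "K \<equiv> cos (\<nu> * of_real pi)" and "S \<equiv> sin (\<nu> * of_real pi)"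
  shows "Yfun \<nu> w - (1 / w + (1 + 2 * \<nu>) * tan (\<nu> * of_real pi) * cnj w)
    = (K * (cos z - 1) + S * (sin z - z) + S * (z - 2 * \<nu> * of_real \<rho>)
       + of_real \<rho> * (S * (cos z - 1) - K * sin z)) / (w * K)"
proof -
  have "\<nu> * of_real (rcoord w) = \<nu> * of_real pi - z"
    unfolding rcoord_eq_pi_minus_arctan[OF w] z_def \<rho>_def by (simp add: algebra_simps)
  then have cos_r: "cos (\<nu> * of_real (rcoord w)) = K * cos z + S * sin z"
    and sin_r: "sin (\<nu> * of_real (rcoord w)) = S * cos z - K * sin z"
    unfolding K_def S_def by (simp_all add: cos_diff sin_diff)
  have cnj_w: "cnj w = of_real \<rho> / w"
    using complex_norm_square[of w] w unfolding \<rho>_def by (simp add: field_simps)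
  show ?thesis
    unfolding Yfun_def cos_r sin_r cnj_w tan_def K_def[symmetric] S_def[symmetric] \<rho>_def[symmetric]
    using w cos_nonzero unfolding K_def by (simp add: field_simps)
qed

lemma small_angle_remainders:
  fixes \<nu> :: complex
  assumes \<rho>: "0 \<le> \<rho>" "\<rho> \<le> 1"
  defines "z \<equiv> \<nu> * of_real (2 * arctan \<rho>)"
    and "c \<equiv> 4 * exp (2 * cmod \<nu>) * (1 + cmod \<nu>) ^ 3"
  shows "cmod (cos z - 1) \<le> c * \<rho>\<^sup>2" and "cmod (sin z - z) \<le> c * \<rho>\<^sup>2"
    and "cmod (z - 2 * \<nu> * of_real \<rho>) \<le> c * \<rho>\<^sup>2" and "cmod (sin z) \<le> c * \<rho>"
proof -
  define N E where "N = 1 + cmod \<nu>" and "E = exp (2 * cmod \<nu>)"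
  have N: "1 \<le> N" and E: "1 \<le> E" unfolding N_def E_def by simp_all
  have c: "c = 4 * E * N ^ 3" unfolding c_def N_def E_def ..
  have d: "0 \<le> arctan \<rho>" "arctan \<rho> \<le> \<rho>" "\<rho> - arctan \<rho> \<le> \<rho> ^ 3 / 3"
    using \<rho> arctan_le_self[of \<rho>] arctan_ge_cubic[of \<rho>] by auto
  have norm_z: "cmod z = cmod \<nu> * (2 * arctan \<rho>)"
    unfolding z_def using d by (simp add: norm_mult)
  have "cmod \<nu> * (2 * arctan \<rho>) \<le> N * (2 * \<rho>)"
    unfolding N_def using d by (intro mult_mono) auto
  then have z_N: "cmod z \<le> 2 * N * \<rho>" unfolding norm_z by simp
  have "cmod \<nu> * (2 * arctan \<rho>) \<le> cmod \<nu> * 2"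
    using d \<rho> by (intro mult_left_mono) auto
  then have exp_z: "exp (cmod z) \<le> E" unfolding E_def norm_z by (simp add: mult.commute)
  have \<rho>3: "\<rho> ^ 3 \<le> \<rho>\<^sup>2"
    using \<rho> by (simp add: power_decreasing)
  have N3: "N\<^sup>2 \<le> N ^ 3" "N \<le> N ^ 3"
    using N by (simp_all add: power_increasing self_le_power)
  show "cmod (cos z - 1) \<le> c * \<rho>\<^sup>2"
  proof -
    have "cmod (cos z - 1) \<le> exp (cmod z) * (cmod z)\<^sup>2" by (rule norm_cos_minus_one_le)
    also have "\<dots> \<le> E * (2 * N * \<rho>)\<^sup>2"
      using exp_z z_N E by (intro mult_mono power_mono) auto
    also have "\<dots> = 4 * E * N\<^sup>2 * \<rho>\<^sup>2" by (simp add: power_mult_distrib)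
    also have "\<dots> \<le> c * \<rho>\<^sup>2" unfolding c using N3 E by (intro mult_right_mono mult_left_mono) auto
    finally show ?thesis .
  qed
  show "cmod (sin z - z) \<le> c * \<rho>\<^sup>2"
  proof -
    have "cmod (sin z - z) \<le> exp (cmod z) * cmod z ^ 3 / 2" by (rule norm_sin_minus_self_le)
    also have "\<dots> \<le> E * (2 * N * \<rho>) ^ 3 / 2"
      using exp_z z_N E by (intro divide_right_mono mult_mono power_mono) auto
    also have "\<dots> = c * \<rho> ^ 3" unfolding c by (simp add: power_mult_distrib)
    also have "\<dots> \<le> c * \<rho>\<^sup>2" unfolding c using \<rho>3 N E by (intro mult_left_mono) auto
    finally show ?thesis .
  qed
  show "cmod (z - 2 * \<nu> * of_real \<rho>) \<le> c * \<rho>\<^sup>2"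
  proof -
    have "z - 2 * \<nu> * of_real \<rho> = - \<nu> * of_real (2 * (\<rho> - arctan \<rho>))"
      unfolding z_def by (simp add: algebra_simps)
    then have "cmod (z - 2 * \<nu> * of_real \<rho>) = cmod \<nu> * (2 * (\<rho> - arctan \<rho>))"
      using d by (simp only: norm_mult norm_minus_cancel norm_of_real) simp
    also have "\<dots> \<le> N * \<rho>\<^sup>2"
      unfolding N_def using d \<rho>3 by (intro mult_mono) auto
    also have "\<dots> \<le> c * \<rho>\<^sup>2"
    proof (intro mult_right_mono)
      have "N \<le> 1 * N ^ 3" using N3 by simp
      also have "\<dots> \<le> 4 * E * N ^ 3" using E N by (intro mult_right_mono) auto
      finally show "N \<le> c" unfolding c .
    qed simp
    finally show ?thesis .
  qed
  show "cmod (sin z) \<le> c * \<rho>"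
  proof -
    have "cmod (sin z) \<le> exp (cmod z) * cmod z" by (rule norm_sin_le_exp_mult)
    also have "\<dots> \<le> E * (2 * N * \<rho>)"
      using exp_z z_N E by (intro mult_mono) auto
    also have "\<dots> \<le> E * (4 * N ^ 3 * \<rho>)"
      using N3 N E \<rho> by (intro mult_left_mono mult_right_mono) auto
    also have "\<dots> = c * \<rho>" unfolding c by simp
    finally show ?thesis .
  qed
qed

lemma expansion_numerator_le:
  fixes \<nu> K S :: complex
  assumes \<rho>: "0 \<le> \<rho>" "\<rho> \<le> 1"
  defines "z \<equiv> \<nu> * of_real (2 * arctan \<rho>)"
    and "c \<equiv> 4 * exp (2 * cmod \<nu>) * (1 + cmod \<nu>) ^ 3"
  shows "cmod (K * (cos z - 1) + S * (sin z - z) + S * (z - 2 * \<nu> * of_real \<rho>)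
      + of_real \<rho> * (S * (cos z - 1) - K * sin z)) \<le> (2 * cmod K + 3 * cmod S) * c * \<rho>\<^sup>2"
proof -
  note R = small_angle_remainders[OF \<rho>, of \<nu>, folded z_def c_def]
  have "cmod (K * (cos z - 1) + S * (sin z - z) + S * (z - 2 * \<nu> * of_real \<rho>)
      + of_real \<rho> * (S * (cos z - 1) - K * sin z))
    \<le> cmod K * (c * \<rho>\<^sup>2) + cmod S * (c * \<rho>\<^sup>2) + cmod S * (c * \<rho>\<^sup>2)
      + \<rho> * (cmod S * (c * \<rho>\<^sup>2) + cmod K * (c * \<rho>))"
    using R \<rho>
    by (intro order_trans[OF norm_triangle_ineq] add_mono order_trans[OF norm_triangle_ineq4])
       (auto simp: norm_mult intro!: order_trans[OF norm_triangle_ineq4] mult_mono add_mono)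
  also have "\<dots> \<le> (2 * cmod K + 3 * cmod S) * c * \<rho>\<^sup>2"
  proof -
    have "\<rho> * (cmod S * (c * \<rho>\<^sup>2)) \<le> cmod S * (c * \<rho>\<^sup>2)"
      using \<rho> by (intro mult_left_le_one_le) (auto simp: c_def)
    then show ?thesis by (simp add: algebra_simps power2_eq_square)
  qed
  finally show ?thesis .
qed

lemma Yfun_expansion_remainder:
  fixes \<nu> :: complex
  assumes K: "cos (\<nu> * of_real pi) \<noteq> 0"
  shows "\<exists>C. \<forall>w. 0 < cmod w \<and> cmod w < 1 \<longrightarrow>
    cmod (Yfun \<nu> w - (1 / w + (1 + 2 * \<nu>) * tan (\<nu> * of_real pi) * cnj w)) \<le> C * cmod w ^ 3"
proof (intro exI allI impI)
  define c where "c = 4 * exp (2 * cmod \<nu>) * (1 + cmod \<nu>) ^ 3"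
  define Ka Sa where "Ka = cmod (cos (\<nu> * of_real pi))" and "Sa = cmod (sin (\<nu> * of_real pi))"
  fix w :: complex
  assume w: "0 < cmod w \<and> cmod w < 1"
  define \<rho> where "\<rho> = (cmod w)\<^sup>2"
  define z where "z = \<nu> * of_real (2 * arctan \<rho>)"
  define numerator where "numerator = cos (\<nu> * of_real pi) * (cos z - 1) + sin (\<nu> * of_real pi) * (sin z - z)
    + sin (\<nu> * of_real pi) * (z - 2 * \<nu> * of_real \<rho>)
    + of_real \<rho> * (sin (\<nu> * of_real pi) * (cos z - 1) - cos (\<nu> * of_real pi) * sin z)"
  have \<rho>: "0 \<le> \<rho>" "\<rho> \<le> 1" unfolding \<rho>_def using w by (simp_all add: power_le_one)
  have Ka: "0 < Ka" unfolding Ka_def using K by simp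
  have "Yfun \<nu> w - (1 / w + (1 + 2 * \<nu>) * tan (\<nu> * of_real pi) * cnj w)
      = numerator / (w * cos (\<nu> * of_real pi))"
    unfolding numerator_def \<rho>_def z_def using w K by (intro Yfun_minus_leading_terms) auto
  then have "cmod (Yfun \<nu> w - (1 / w + (1 + 2 * \<nu>) * tan (\<nu> * of_real pi) * cnj w))
      = cmod numerator / (cmod w * Ka)"
    by (simp add: norm_divide norm_mult Ka_def)
  also have "\<dots> \<le> (2 * Ka + 3 * Sa) * c * \<rho>\<^sup>2 / (cmod w * Ka)"
    using w Ka expansion_numerator_le[OF \<rho>, where \<nu> = \<nu>, folded z_def c_def]
    unfolding numerator_def Ka_def Sa_def by (intro divide_right_mono) auto
  also have "\<dots> = (2 * Ka + 3 * Sa) * c / Ka * cmod w ^ 3"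
    unfolding \<rho>_def using w Ka by (simp add: field_simps power2_eq_square power3_eq_cube power4_eq_xxxx)
  finally show "cmod (Yfun \<nu> w - (1 / w + (1 + 2 * \<nu>) * tan (\<nu> * of_real pi) * cnj w))
      \<le> (2 * Ka + 3 * Sa) * c / Ka * cmod w ^ 3" .
qed

lemma power3_le_powr:
  fixes x \<epsilon> :: real
  assumes "0 \<le> x" "x \<le> 1" "0 < \<epsilon>"
  shows "x ^ 3 \<le> x powr (2 - \<epsilon>)"
proof (cases "x = 0")
  case False
  then have "x ^ 3 = x powr 3" using assms by (simp add: powr_realpow)
  also have "\<dots> \<le> x powr (2 - \<epsilon>)" using assms by (intro powr_mono') auto
  finally show ?thesis .
qed simp

lemma Yfun_bounded_at_infinity: "\<exists>M R. \<forall>w. R < cmod w \<longrightarrow> cmod (Yfun \<nu> w) \<le> M"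
proof (intro exI allI impI)
  fix w :: complex
  assume "1 < cmod w"
  then have "cmod (Yfun \<nu> w) \<le> cmod (Yfun \<nu> w) * cmod w" by (simp add: mult_le_cancel_left1)
  also note norm_Yfun_mult_norm_le
  finally show "cmod (Yfun \<nu> w) \<le> exp (cmod \<nu> * pi) * (1 + 2 * cmod \<nu>) / cmod (cos (\<nu> * of_real pi))" .
qed

theorem mainTheorem10:
  fixes \<nu> lam :: complex
  assumes "lam = \<nu> * (\<nu> + 1)"
    and "cos (\<nu> * of_real pi) \<noteq> 0"
  shows "integrable lborel (\<lambda>w. (cmod (Yfun \<nu> w))^2 * area_density w) \<and>
         (\<forall>r\<in>{0<..<pi}. \<forall>\<phi>. polar_C2_at (Ypolar \<nu>) r \<phi> \<and>
           Lap_star (Ypolar \<nu>) r \<phi> - lam * Ypolar \<nu> r \<phi> = 0) \<and>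
         (\<exists>M R. \<forall>w. R < cmod w \<longrightarrow> cmod (Yfun \<nu> w) \<le> M) \<and>
         (\<forall>\<epsilon>>0. \<exists>C \<delta>. \<delta> > 0 \<and> (\<forall>w. 0 < cmod w \<and> cmod w < \<delta> \<longrightarrow>
           cmod (Yfun \<nu> w - (1 / w + 0 + (1 + 2 * \<nu>) * tan (\<nu> * of_real pi) * cnj w + 0 * w))
             \<le> C * cmod w powr (2 - \<epsilon>)))"
proof -
  obtain C where C: "\<And>w. 0 < cmod w \<and> cmod w < 1 \<Longrightarrow>
      cmod (Yfun \<nu> w - (1 / w + (1 + 2 * \<nu>) * tan (\<nu> * of_real pi) * cnj w)) \<le> C * cmod w ^ 3"
    using Yfun_expansion_remainder[OF assms(2)] by blast
  have expansion: "cmod (Yfun \<nu> w - (1 / w + 0 + (1 + 2 * \<nu>) * tan (\<nu> * of_real pi) * cnj w + 0 * w))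
      \<le> \<bar>C\<bar> * cmod w powr (2 - \<epsilon>)" if "0 < \<epsilon>" and w: "0 < cmod w \<and> cmod w < 1" for \<epsilon> w
    using C[OF w] power3_le_powr[of "cmod w" \<epsilon>] that
    by (simp add: order_trans[OF _ mult_mono[OF abs_ge_self]])
  then have "\<forall>\<epsilon>>0. \<exists>C \<delta>. \<delta> > 0 \<and> (\<forall>w. 0 < cmod w \<and> cmod w < \<delta> \<longrightarrow>
      cmod (Yfun \<nu> w - (1 / w + 0 + (1 + 2 * \<nu>) * tan (\<nu> * of_real pi) * cnj w + 0 * w))
        \<le> C * cmod w powr (2 - \<epsilon>))"
    using zero_less_one by blast
  then show ?thesis
    using integrable_Yfun_square Ypolar_eigenfunction Yfun_bounded_at_infinity assms(1) by simp
qed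

end
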